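(* Let $\gamma, c_1, c_2 > 0$ be real numbers. There exist $\alpha_0 > 0$ and $N_0$, depending only on $\gamma, c_1, c_2$, such that the following holds. Let $N \ge N_0$, let $Q = N^\gamma$, let $X \subseteq [N]$ be a set of integers, and suppose there is a set of primes $P \subseteq \mathcal{P}(Q)$ with $w(P) \ge c_1 \log Q$ such that for every $p \in P$ there are at least $c_2|X|$ elements of $X$ lying in at most $\alpha p$ residue classes modulo $p$, where $0 < \alpha \le \alpha_0$ is independent of $p$. Then $|X| < Q$.
   Context: $[N] = \{0,1,\ldots,N\}$. $\mathcal{P}(Q)$ denotes the set of primes $p \le Q$, and for a finite set of primes $P$, $w(P) := \sum_{p \in P} \frac{\log p}{p}$. *)

theory Defs
  imports Complex_Main "HOL-Computational_Algebra.Primes"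
begin

definition wP :: "nat set \<Rightarrow> real" where
  "wP P = (\<Sum>p\<in>P. ln (real p) / real p)"

end

theory Submission
  imports Defs "HOL-Analysis.Convex"
begin

text \<open>Let \<open>n = |X|\<close> and suppose \<open>n \<ge> Q\<close>. Count the pairs \<open>x \<noteq> y\<close> in \<open>X\<close> with
  \<open>x \<equiv> y (mod p)\<close>, weighted by \<open>log p\<close> and summed over \<open>p \<in> P\<close>. Since \<open>0 < |x - y| \<le> N\<close>, the
  primes dividing \<open>x - y\<close> have total log-weight at most \<open>log N\<close>, so the weighted count is at most
  \<open>n\<^sup>2 log N\<close>. On the other hand, \<open>c\<^sub>2 n\<close> elements of \<open>X\<close> lie in at most \<open>\<alpha> p\<close> classes modulo \<open>p\<close>,
  so by Cauchy-Schwarz there are at least \<open>c\<^sub>2\<^sup>2 n\<^sup>2/(\<alpha> p) - n\<close> such pairs for each \<open>p\<close>. Summing,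
  \<open>c\<^sub>2\<^sup>2 n\<^sup>2 w(P)/\<alpha> \<le> n\<^sup>2 log N + n Q log Q\<close>, which contradicts \<open>w(P) \<ge> c\<^sub>1 log Q\<close> once \<open>\<alpha>\<close> is small.\<close>

definition collisions :: "('a \<Rightarrow> 'b) \<Rightarrow> 'a set \<Rightarrow> ('a \<times> 'a) set" where
  "collisions f X = {(x, y) \<in> X \<times> X. x \<noteq> y \<and> f x = f y}"

lemma finite_collisions: "finite X \<Longrightarrow> finite (collisions f X)"
  by (rule finite_subset[of _ "X \<times> X"]) (auto simp: collisions_def)

lemma prod_distinct_primes_dvd:
  fixes d :: "'a :: factorial_semiring_gcd"
  assumes "finite S" "\<And>p. p \<in> S \<Longrightarrow> prime p" "\<And>p. p \<in> S \<Longrightarrow> p dvd d"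
  shows "\<Prod>S dvd d"
  using assms
proof (induction S rule: finite_induct)
  case (insert q S)
  have "coprime q (\<Prod>S)"
    using insert by (intro prod_coprime_right primes_coprime) auto
  with insert show ?case by (simp add: divides_mult)
qed simp

lemma sum_ln_prime_divisors_le:
  assumes "finite S" "\<And>p. p \<in> S \<Longrightarrow> prime p" "\<And>p. p \<in> S \<Longrightarrow> p dvd d" "d > (0::nat)"
  shows "(\<Sum>p\<in>S. ln (real p)) \<le> ln (real d)"
proof -
  have pos: "real p > 0" if "p \<in> S" for p
    using assms(2) that prime_gt_0_nat by auto
  have "\<Prod>S \<le> d"
    using prod_distinct_primes_dvd[OF assms(1-3)] assms(4) by (simp add: dvd_imp_le)
  then have "(\<Prod>p\<in>S. real p) \<le> real d"
    unfolding of_nat_prod[symmetric] by (rule of_nat_mono)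
  have "(\<Sum>p\<in>S. ln (real p)) = ln (\<Prod>p\<in>S. real p)"
    using pos by (intro ln_prod[symmetric] assms(1)) auto
  also have "\<dots> \<le> ln (real d)"
    using \<open>(\<Prod>p\<in>S. real p) \<le> real d\<close> pos by (intro ln_mono prod_pos) auto
  finally show ?thesis .
qed

lemma sum_ln_primes_cong_le:
  assumes "finite P" "\<And>p. p \<in> P \<Longrightarrow> prime p" "x \<le> N" "y \<le> N" "x \<noteq> (y::nat)"
  shows "(\<Sum>p | p \<in> P \<and> x mod p = y mod p. ln (real p)) \<le> ln (real N)"
proof -
  define d where "d = (if x < y then y - x else x - y)"
  have d: "0 < d" "d \<le> N"
    using assms(3-5) by (auto simp: d_def)
  have "p dvd d" if "x mod p = y mod p" for p
    using that mod_eq_dvd_iff_nat[of x y p] mod_eq_dvd_iff_nat[of y x p] by (auto simp: d_def)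
  then have "(\<Sum>p | p \<in> P \<and> x mod p = y mod p. ln (real p)) \<le> ln (real d)"
    using assms(1,2) d by (intro sum_ln_prime_divisors_le) auto
  also have "\<dots> \<le> ln (real N)"
    using d by simp
  finally show ?thesis .
qed

lemma sum_ln_mult_card_collisions_le:
  assumes "finite P" "\<And>p. p \<in> P \<Longrightarrow> prime p" "X \<subseteq> {0..N}"
  shows "(\<Sum>p\<in>P. ln (real p) * real (card (collisions (\<lambda>x. x mod p) X)))
         \<le> real (card X)^2 * ln (real N)"
proof -
  define D where "D = {z \<in> X \<times> X. fst z \<noteq> snd z}"
  have finX: "finite X"
    using assms(3) finite_subset by blast
  then have finD: "finite D"
    by (simp add: D_def)
  have "ln (real p) * real (card (collisions (\<lambda>x. x mod p) X))
      = (\<Sum>z\<in>D. if fst z mod p = snd z mod p then ln (real p) else 0)" for p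
  proof -
    have "collisions (\<lambda>x. x mod p) X = {z \<in> D. fst z mod p = snd z mod p}"
      by (auto simp: collisions_def D_def)
    then show ?thesis
      using finD by (simp add: sum.If_cases Collect_conj_eq Int_commute)
  qed
  then have "(\<Sum>p\<in>P. ln (real p) * real (card (collisions (\<lambda>x. x mod p) X)))
      = (\<Sum>p\<in>P. \<Sum>z\<in>D. if fst z mod p = snd z mod p then ln (real p) else 0)"
    by simp
  also have "\<dots> = (\<Sum>z\<in>D. \<Sum>p | p \<in> P \<and> fst z mod p = snd z mod p. ln (real p))"
    using assms(1) by (subst sum.swap) (simp add: sum.inter_filter[symmetric])
  also have "\<dots> \<le> (\<Sum>z\<in>D. ln (real N))"
    using assms by (intro sum_mono sum_ln_primes_cong_le) (auto simp: D_def)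
  also have "\<dots> \<le> real (card X)^2 * ln (real N)"
  proof -
    have "card D \<le> card (X \<times> X)"
      using finX unfolding D_def by (intro card_mono) auto
    then have "real (card D) \<le> real (card X)^2"
      by (simp add: card_cartesian_product power2_eq_square flip: of_nat_mult)
    moreover have "ln (real N) \<ge> 0"
      by (cases "N = 0") auto
    ultimately show ?thesis
      by (simp add: mult_right_mono)
  qed
  finally show ?thesis .
qed

lemma card_squared_le_card_mult_fibre_pairs:
  assumes "finite Y" "finite R" "f ` Y \<subseteq> R"
  shows "real (card Y)^2 \<le> real (card R) * real (card {(x, y) \<in> Y \<times> Y. f x = f y})"
proof -
  define F where "F r = {x \<in> Y. f x = r}" for r
  have "real (card Y) = (\<Sum>r\<in>R. real (card (F r)))"
    using sum.group[OF assms, of "\<lambda>_. 1 :: real"] by (simp add: F_def)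
  moreover have "real (card {(x, y) \<in> Y \<times> Y. f x = f y}) = (\<Sum>r\<in>R. real (card (F r))^2)"
  proof -
    have "{(x, y) \<in> Y \<times> Y. f x = f y} = (\<Union>r\<in>R. F r \<times> F r)"
      using assms(3) by (auto simp: F_def)
    moreover have "card (\<Union>r\<in>R. F r \<times> F r) = (\<Sum>r\<in>R. card (F r \<times> F r))"
      using assms(1,2) by (intro card_UN_disjoint) (auto simp: F_def)
    ultimately show ?thesis
      by (simp add: card_cartesian_product power2_eq_square)
  qed
  ultimately show ?thesis
    using sum_squared_le_sum_of_squares[of "\<lambda>r. real (card (F r))" R] by (simp add: mult.commute)
qed

lemma card_in_classes_squared_le:
  assumes "finite X" "finite R"
  shows "real (card {x \<in> X. f x \<in> R})^2 \<le> real (card R) * (real (card (collisions f X)) + real (card X))"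
proof -
  define Y where "Y = {x \<in> X. f x \<in> R}"
  have "{(x, y) \<in> Y \<times> Y. f x = f y} \<subseteq> collisions f X \<union> (\<lambda>x. (x, x)) ` X"
    by (auto simp: Y_def collisions_def)
  then have "card {(x, y) \<in> Y \<times> Y. f x = f y} \<le> card (collisions f X \<union> (\<lambda>x. (x, x)) ` X)"
    using assms(1) by (intro card_mono) (auto simp: finite_collisions)
  also have "\<dots> \<le> card (collisions f X) + card X"
    using card_Un_le card_image_le[OF assms(1)] by (meson add_left_mono order_trans)
  finally have "real (card {(x, y) \<in> Y \<times> Y. f x = f y}) \<le> real (card (collisions f X)) + real (card X)"
    by linarith
  moreover have "real (card Y)^2 \<le> real (card R) * real (card {(x, y) \<in> Y \<times> Y. f x = f y})"
    using assms by (intro card_squared_le_card_mult_fibre_pairs) (auto simp: Y_def)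
  ultimately show ?thesis
    unfolding Y_def by (meson mult_left_mono of_nat_0_le_iff order_trans)
qed

lemma finite_primes_le: "finite {p :: nat. prime p \<and> real p \<le> Q}"
  by (rule finite_subset[of _ "{..nat \<lfloor>Q\<rfloor>}"]) (auto simp: le_nat_floor)

lemma sum_ln_primes_le:
  assumes "P \<subseteq> {p. prime p \<and> real p \<le> Q}" "Q \<ge> 1"
  shows "(\<Sum>p\<in>P. ln (real p)) \<le> Q * ln Q"
proof -
  have "P \<subseteq> {1..nat \<lfloor>Q\<rfloor>}"
    using assms(1) prime_ge_1_nat le_nat_floor by auto
  then have "card P \<le> nat \<lfloor>Q\<rfloor>"
    using card_mono[of "{1..nat \<lfloor>Q\<rfloor>}"] by simp
  then have card: "real (card P) \<le> Q"
    using of_nat_floor[of Q] assms(2) by linarith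
  have "ln (real p) \<le> ln Q" if "p \<in> P" for p
    using assms(1) that prime_gt_0_nat by (intro ln_mono) auto
  then have "(\<Sum>p\<in>P. ln (real p)) \<le> real (card P) * ln Q"
    by (rule sum_bounded_above)
  also have "\<dots> \<le> Q * ln Q"
    using card assms(2) by (intro mult_right_mono) auto
  finally show ?thesis .
qed

lemma sieve_collision_inequality:
  fixes \<alpha> c :: real
  assumes "finite P" "\<And>p. p \<in> P \<Longrightarrow> prime p" "X \<subseteq> {0..N}" "\<alpha> > 0" "c \<ge> 0"
    and classes: "\<forall>p\<in>P. \<exists>R :: nat set. R \<subseteq> {..<p} \<and> real (card R) \<le> \<alpha> * real p \<and>
                     real (card {x\<in>X. x mod p \<in> R}) \<ge> c * real (card X)"
  shows "c^2 * real (card X)^2 / \<alpha> * wP P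
           \<le> real (card X)^2 * ln (real N) + real (card X) * (\<Sum>p\<in>P. ln (real p))"
proof -
  define n where "n = real (card X)"
  define K where "K p = real (card (collisions (\<lambda>x. x mod p) X))" for p
  have finX: "finite X"
    using assms(3) finite_subset by blast
  have per_prime: "c^2 * n^2 / \<alpha> * (ln (real p) / real p) \<le> ln (real p) * K p + n * ln (real p)"
    if pP: "p \<in> P" for p
  proof -
    obtain R where R: "R \<subseteq> {..<p}" "real (card R) \<le> \<alpha> * real p"
      "real (card {x\<in>X. x mod p \<in> R}) \<ge> c * n"
      using classes pP by (auto simp: n_def)
    have p: "real p > 0" "ln (real p) \<ge> 0"
      using assms(2)[OF pP] prime_gt_0_nat prime_ge_1_nat by auto
    have "(c * n)^2 \<le> real (card {x\<in>X. x mod p \<in> R})^2"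
      using R(3) assms(5) by (intro power_mono) (auto simp: n_def)
    also have "\<dots> \<le> real (card R) * (K p + n)"
      unfolding K_def n_def using finX R(1) finite_subset by (intro card_in_classes_squared_le) auto
    also have "\<dots> \<le> \<alpha> * real p * (K p + n)"
      using R(2) by (intro mult_right_mono) (auto simp: K_def n_def)
    finally have "c^2 * n^2 / \<alpha> / real p \<le> K p + n"
      using assms(4) p(1) by (simp add: field_simps power_mult_distrib)
    then have "ln (real p) * (c^2 * n^2 / \<alpha> / real p) \<le> ln (real p) * (K p + n)"
      using p(2) by (rule mult_left_mono)
    then show ?thesis
      by (simp add: algebra_simps)
  qed
  have "c^2 * n^2 / \<alpha> * wP P \<le> (\<Sum>p\<in>P. ln (real p) * K p + n * ln (real p))"
    unfolding wP_def sum_distrib_left using per_prime by (rule sum_mono)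
  also have "\<dots> \<le> n^2 * ln (real N) + n * (\<Sum>p\<in>P. ln (real p))"
    using sum_ln_mult_card_collisions_le[OF assms(1-3)]
    by (simp add: sum.distrib sum_distrib_left K_def n_def)
  finally show ?thesis
    by (simp add: n_def)
qed

lemma sieve_weight_le_if_card_ge:
  fixes \<alpha> c Q :: real
  assumes P: "P \<subseteq> {p. prime p \<and> real p \<le> Q}" and X: "X \<subseteq> {0..N}"
    and "1 \<le> Q" "Q \<le> real (card X)" "\<alpha> > 0" "c \<ge> 0"
    and classes: "\<forall>p\<in>P. \<exists>R :: nat set. R \<subseteq> {..<p} \<and> real (card R) \<le> \<alpha> * real p \<and>
                     real (card {x\<in>X. x mod p \<in> R}) \<ge> c * real (card X)"
  shows "c^2 / \<alpha> * wP P \<le> ln (real N) + ln Q"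
proof -
  define n where "n = real (card X)"
  have "n > 0"
    using assms(3,4) by (simp add: n_def)
  have prime: "\<And>p. p \<in> P \<Longrightarrow> prime p"
    using P by auto
  have "(\<Sum>p\<in>P. ln (real p)) \<le> n * ln Q"
  proof -
    have "(\<Sum>p\<in>P. ln (real p)) \<le> Q * ln Q"
      using P assms(3) by (rule sum_ln_primes_le)
    also have "\<dots> \<le> n * ln Q"
      using assms(3,4) by (intro mult_right_mono) (auto simp: n_def)
    finally show ?thesis .
  qed
  have "n^2 * (c^2 / \<alpha> * wP P) = c^2 * n^2 / \<alpha> * wP P"
    by simp
  also have "\<dots> \<le> n^2 * ln (real N) + n * (\<Sum>p\<in>P. ln (real p))"
    unfolding n_def
    using sieve_collision_inequality[OF finite_subset[OF P finite_primes_le] prime X assms(5,6) classes] .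
  also have "\<dots> \<le> n^2 * ln (real N) + n * (n * ln Q)"
    using \<open>(\<Sum>p\<in>P. ln (real p)) \<le> n * ln Q\<close> \<open>n > 0\<close> by simp
  also have "\<dots> = n^2 * (ln (real N) + ln Q)"
    by (simp add: algebra_simps power2_eq_square)
  finally show ?thesis
    by (rule mult_left_le_imp_le) (use \<open>n > 0\<close> in auto)
qed

theorem lemma3p1:
  fixes \<gamma> c1 c2 :: real
  assumes "\<gamma> > 0" "c1 > 0" "c2 > 0"
  shows "\<exists>\<alpha>0 > 0. \<exists>N0 :: nat. \<forall>N \<ge> N0. \<forall>(X :: nat set) (P :: nat set) (\<alpha> :: real).
           X \<subseteq> {0..N} \<longrightarrow>
           P \<subseteq> {p. prime p \<and> real p \<le> real N powr \<gamma>} \<longrightarrow>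
           wP P \<ge> c1 * ln (real N powr \<gamma>) \<longrightarrow>
           0 < \<alpha> \<longrightarrow> \<alpha> \<le> \<alpha>0 \<longrightarrow>
           (\<forall>p\<in>P. \<exists>R :: nat set. R \<subseteq> {..<p} \<and> real (card R) \<le> \<alpha> * real p \<and>
                real (card {x\<in>X. x mod p \<in> R}) \<ge> c2 * real (card X)) \<longrightarrow>
           real (card X) < real N powr \<gamma>"
  \<comment> \<open>Any \<open>\<alpha>0 < c2\<^sup>2 c1 \<gamma> / (1 + \<gamma>)\<close> works; the factor 2 leaves room for a strict contradiction.\<close>
proof (intro exI[of _ "c2^2 * c1 * \<gamma> / (2 * (1 + \<gamma>))"] conjI exI[of _ "2::nat"] allI impI)
  show "c2^2 * c1 * \<gamma> / (2 * (1 + \<gamma>)) > 0"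
    using assms by simp
  fix N :: nat and X P :: "nat set" and \<alpha> :: real
  assume N: "2 \<le> N" and X: "X \<subseteq> {0..N}" and P: "P \<subseteq> {p. prime p \<and> real p \<le> real N powr \<gamma>}"
    and w: "wP P \<ge> c1 * ln (real N powr \<gamma>)" and \<alpha>: "0 < \<alpha>" "\<alpha> \<le> c2^2 * c1 * \<gamma> / (2 * (1 + \<gamma>))"
    and classes: "\<forall>p\<in>P. \<exists>R :: nat set. R \<subseteq> {..<p} \<and> real (card R) \<le> \<alpha> * real p \<and>
                     real (card {x\<in>X. x mod p \<in> R}) \<ge> c2 * real (card X)"
  define L where "L = ln (real N)"
  have L: "L > 0" "ln (real N powr \<gamma>) = \<gamma> * L" and Q: "real N powr \<gamma> \<ge> 1"
    using N assms(1) by (auto simp: L_def ln_powr ge_one_powr_ge_zero)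
  show "real (card X) < real N powr \<gamma>"
  proof (rule ccontr)
    assume "\<not> real (card X) < real N powr \<gamma>"
    then have "c2^2 / \<alpha> * wP P \<le> (1 + \<gamma>) * L"
      using sieve_weight_le_if_card_ge[OF P X Q _ \<alpha>(1) _ classes] assms(3) L
      by (simp add: L_def algebra_simps)
    moreover have "2 * (1 + \<gamma>) * L \<le> c2^2 / \<alpha> * wP P"
    proof -
      have ratio: "2 * (1 + \<gamma>) \<le> c2^2 / \<alpha> * (c1 * \<gamma>)"
        using \<alpha> assms(1) by (simp add: field_simps)
      have "2 * (1 + \<gamma>) * L \<le> c2^2 / \<alpha> * (c1 * (\<gamma> * L))"
        using mult_right_mono[OF ratio, of L] L(1) by (simp add: mult.assoc)
      also have "\<dots> \<le> c2^2 / \<alpha> * wP P"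
        using w L(2) \<alpha>(1) by (intro mult_left_mono) auto
      finally show ?thesis .
    qed
    moreover have "(1 + \<gamma>) * L > 0"
      using L(1) assms(1) by simp
    ultimately show False
      by linarith
  qed
qed

end
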